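(* Let $T\in\mathbb{R}^{M\times M}$ be symmetric positive definite, let $D\in\mathbb{R}^{M\times M}$ be diagonal with nonpositive diagonal entries, and let $\omega>0$. Let $\mathcal{B},\mathcal{H},\mathcal{L}_\omega$ be as defined in the context. Then $\omega I+\mathcal{B}$ and $\omega I+\mathcal{H}$ are invertible, and the spectral radius of $\mathcal{L}_\omega$ satisfies $$\rho(\mathcal{L}_\omega)\le \sigma(\omega)<1,\qquad \sigma(\omega)=\max_{\lambda_i\in\lambda(D)}\left|\frac{\omega+\lambda_i}{\omega-\lambda_i}\right|\cdot\max_{\mu_i\in\lambda(T)}\sqrt{\frac{(\omega-\mu_i)^2+1}{(\omega+\mu_i)^2+1}},$$ where $\lambda(D)$ and $\lambda(T)$ denote the sets of eigenvalues of $D$ and $T$. In particular, the iteration $x^{(k+1)}=\mathcal{L}_\omega x^{(k)}+\mathcal{F}_\omega^{-1}f$ (equivalently, $(\omega I+\mathcal{B})x^{(k+1/2)}=(\omega I-\mathcal{H})x^{(k)}+f$, $(\omega I+\mathcal{H})x^{(k+1)}=(\omega I-\mathcal{B})x^{(k+1/2)}+f$) converges to the solution of $\mathcal{R}x=f$ for every initial guess and every $f\in\mathbb{R}^{2M}$.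
   Context: Let $T\in\mathbb{R}^{M\times M}$ and $D\in\mathbb{R}^{M\times M}$ be as stated, and let $I$ denote the identity matrix of the appropriate size. Define the $2M\times 2M$ real block matrices $$\mathcal{R}=\begin{bmatrix}T-D & -I\\ I & T-D\end{bmatrix},\quad \mathcal{B}=\begin{bmatrix}-D&0\\0&-D\end{bmatrix},\quad \mathcal{H}=\begin{bmatrix}T&-I\\ I&T\end{bmatrix},$$ so that $\mathcal{R}=\mathcal{B}+\mathcal{H}$. For $\omega>0$ define $$\mathcal{F}_\omega=\tfrac{1}{2\omega}(\omega I+\mathcal{B})(\omega I+\mathcal{H}),\quad \mathcal{G}_\omega=\tfrac{1}{2\omega}(\omega I-\mathcal{B})(\omega I-\mathcal{H}),$$ $$\mathcal{L}_\omega=(\omega I+\mathcal{H})^{-1}(\omega I-\mathcal{B})(\omega I+\mathcal{B})^{-1}(\omega I-\mathcal{H})=\mathcal{F}_\omega^{-1}\mathcal{G}_\omega .$$ *)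

theory Defs
  imports "Jordan_Normal_Form.Spectral_Radius"
begin

definition spd_mat :: "nat \<Rightarrow> real mat \<Rightarrow> bool" where
  "spd_mat n T \<longleftrightarrow> T \<in> carrier_mat n n \<and> transpose_mat T = T \<and>
     (\<forall>x \<in> carrier_vec n. x \<noteq> 0\<^sub>v n \<longrightarrow> x \<bullet> (T *\<^sub>v x) > 0)"

text \<open>The inverse of a square matrix (meaningful when the matrix is invertible).\<close>
definition inv_mat :: "real mat \<Rightarrow> real mat" where
  "inv_mat A = (SOME B. B \<in> carrier_mat (dim_row A) (dim_row A) \<and>
                         A * B = 1\<^sub>m (dim_row A) \<and> B * A = 1\<^sub>m (dim_row A))"

definition Rblk :: "real mat \<Rightarrow> real mat \<Rightarrow> real mat" where
  "Rblk T D = four_block_mat (T - D) (- 1\<^sub>m (dim_row D)) (1\<^sub>m (dim_row D)) (T - D)"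

definition Bblk :: "real mat \<Rightarrow> real mat" where
  "Bblk D = four_block_mat (- D) (0\<^sub>m (dim_row D) (dim_row D)) (0\<^sub>m (dim_row D) (dim_row D)) (- D)"

definition Hblk :: "real mat \<Rightarrow> real mat" where
  "Hblk T = four_block_mat T (- 1\<^sub>m (dim_row T)) (1\<^sub>m (dim_row T)) T"

definition Fmat :: "real \<Rightarrow> real mat \<Rightarrow> real mat \<Rightarrow> real mat" where
  "Fmat \<omega> T D = (let n = 2 * dim_row D in
     (1 / (2 * \<omega>)) \<cdot>\<^sub>m ((\<omega> \<cdot>\<^sub>m 1\<^sub>m n + Bblk D) * (\<omega> \<cdot>\<^sub>m 1\<^sub>m n + Hblk T)))"

definition Gmat :: "real \<Rightarrow> real mat \<Rightarrow> real mat \<Rightarrow> real mat" where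
  "Gmat \<omega> T D = (let n = 2 * dim_row D in
     (1 / (2 * \<omega>)) \<cdot>\<^sub>m ((\<omega> \<cdot>\<^sub>m 1\<^sub>m n - Bblk D) * (\<omega> \<cdot>\<^sub>m 1\<^sub>m n - Hblk T)))"

definition Lmat :: "real \<Rightarrow> real mat \<Rightarrow> real mat \<Rightarrow> real mat" where
  "Lmat \<omega> T D = (let n = 2 * dim_row D in
     inv_mat (\<omega> \<cdot>\<^sub>m 1\<^sub>m n + Hblk T) * (\<omega> \<cdot>\<^sub>m 1\<^sub>m n - Bblk D)
       * inv_mat (\<omega> \<cdot>\<^sub>m 1\<^sub>m n + Bblk D) * (\<omega> \<cdot>\<^sub>m 1\<^sub>m n - Hblk T))"

definition sigma :: "real \<Rightarrow> real mat \<Rightarrow> real mat \<Rightarrow> real" where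
  "sigma \<omega> T D =
     Max ((\<lambda>l. \<bar>(\<omega> + l) / (\<omega> - l)\<bar>) ` {l. eigenvalue D l}) *
     Max ((\<lambda>m. sqrt (((\<omega> - m)^2 + 1) / ((\<omega> + m)^2 + 1))) ` {m. eigenvalue T m})"

definition vec_tendsto :: "(nat \<Rightarrow> real vec) \<Rightarrow> real vec \<Rightarrow> bool" where
  "vec_tendsto X x \<longleftrightarrow> (\<forall>i < dim_vec x. (\<lambda>k. X k $ i) \<longlonglongrightarrow> x $ i)"

end

theory Submission
  imports Defs
begin

text \<open>
  \<open>\<omega> I + \<B>\<close> is diagonal with entries \<open>\<omega> - D\<^sub>i\<^sub>i > 0\<close>, and for \<open>u = (a, b)\<close> one has
  \<open>\<parallel>(\<omega> I \<plusminus> \<H>) u\<parallel>\<^sup>2 = \<parallel>(\<omega> \<plusminus> T) a\<parallel>\<^sup>2 + \<parallel>a\<parallel>\<^sup>2 + \<parallel>(\<omega> \<plusminus> T) b\<parallel>\<^sup>2 + \<parallel>b\<parallel>\<^sup>2\<close>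
  because the cross terms cancel for symmetric \<open>T\<close>; in particular both shifted matrices are injective.
  In the norm \<open>v \<mapsto> \<parallel>(\<omega> I + \<H>) v\<parallel>\<close> the matrix \<open>\<L>\<^sub>\<omega>\<close> acts as
  \<open>(\<omega> I - \<B>)(\<omega> I + \<B>)\<^sup>-\<^sup>1 \<cdot> (\<omega> I - \<H>)(\<omega> I + \<H>)\<^sup>-\<^sup>1\<close>. The first factor is diagonal and
  contracts by the first maximum in \<open>\<sigma>(\<omega>)\<close>; the second contracts by the second maximum \<open>\<beta>\<close>,
  since \<open>(\<omega> - T)\<^sup>2 + I - \<beta>\<^sup>2 ((\<omega> + T)\<^sup>2 + I)\<close> is a quadratic polynomial in the symmetric matrix
  \<open>T\<close> that is nonpositive on its spectrum. Applied to real and imaginary parts of a complex eigenvector, this bounds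
  every eigenvalue of \<open>\<L>\<^sub>\<omega>\<close> by \<open>\<sigma>(\<omega>) < 1\<close>. Finally \<open>\<F>\<^sub>\<omega> - \<G>\<^sub>\<omega> = \<R>\<close> and
  \<open>\<F>\<^sub>\<omega> \<L>\<^sub>\<omega> = \<G>\<^sub>\<omega>\<close> (the diagonal factors commute), so the solution of \<open>\<R> x = f\<close> is the fixed
  point of the affine iteration, which therefore converges to it.
\<close>

section \<open>Real vectors and symmetric matrices\<close>

lemma scalar_prod_self_sum_squares:
  "x \<in> carrier_vec n \<Longrightarrow> x \<bullet> (x :: real vec) = (\<Sum>i<n. (x $ i)^2)"
  by (simp add: scalar_prod_def lessThan_atLeast0 power2_eq_square)

lemma scalar_prod_self_nonneg: "(x :: real vec) \<bullet> x \<ge> 0"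
  unfolding scalar_prod_def by (auto intro: sum_nonneg)

lemma scalar_prod_self_eq_0_iff:
  assumes "(x :: real vec) \<in> carrier_vec n" shows "x \<bullet> x = 0 \<longleftrightarrow> x = 0\<^sub>v n"
proof -
  have "conjugate x = x" by (rule eq_vecI) (auto simp: conjugate_vec_def)
  then show ?thesis using conjugate_square_eq_0_vec[OF assms] by simp
qed

lemma scalar_prod_self_le:
  assumes "v \<in> carrier_vec n" and "\<And>i. i < n \<Longrightarrow> \<bar>v $ i\<bar> \<le> B"
  shows "v \<bullet> (v :: real vec) \<le> real n * B^2"
proof -
  have "v \<bullet> v = (\<Sum>i<n. \<bar>v $ i\<bar>^2)" using assms(1) by (simp add: scalar_prod_self_sum_squares)
  also have "\<dots> \<le> (\<Sum>i<n. B^2)" using assms(2) by (intro sum_mono power_mono) auto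
  finally show ?thesis by simp
qed

lemma sum_products_squared_le:
  fixes a b :: "nat \<Rightarrow> real" assumes "finite I"
  shows "(\<Sum>i\<in>I. a i * b i)^2 \<le> (\<Sum>i\<in>I. a i * a i) * (\<Sum>i\<in>I. b i * b i)"
proof (cases "(\<Sum>i\<in>I. b i * b i) = 0")
  case True
  then have "\<forall>i\<in>I. b i = 0" using sum_nonneg_eq_0_iff[OF assms, of "\<lambda>i. b i * b i"] by simp
  then show ?thesis by simp
next
  case False
  define A where "A = (\<Sum>i\<in>I. a i * a i)"
  define B where "B = (\<Sum>i\<in>I. b i * b i)"
  define S where "S = (\<Sum>i\<in>I. a i * b i)"
  have "B > 0" using False sum_nonneg[of I "\<lambda>i. b i * b i"] unfolding B_def by fastforce
  define t where "t = S / B"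
  have "0 \<le> (\<Sum>i\<in>I. (a i - t * b i) * (a i - t * b i))" by (auto intro: sum_nonneg)
  also have "\<dots> = (\<Sum>i\<in>I. a i * a i - 2 * t * (a i * b i) + t * t * (b i * b i))"
    by (rule sum.cong) (auto simp: algebra_simps)
  also have "\<dots> = A - 2 * t * S + t * t * B"
    unfolding A_def B_def S_def by (simp add: sum.distrib sum_subtractf sum_distrib_left)
  also have "\<dots> = A - S * S / B" unfolding t_def using \<open>B > 0\<close> by (simp add: field_simps)
  finally have "S * S \<le> A * B" using \<open>B > 0\<close> by (simp add: field_simps)
  then show ?thesis unfolding A_def B_def S_def by (simp add: power2_eq_square)
qed

lemma scalar_prod_squared_le:
  "x \<in> carrier_vec n \<Longrightarrow> z \<in> carrier_vec n \<Longrightarrow> (x \<bullet> z)^2 \<le> (x \<bullet> x) * ((z :: real vec) \<bullet> z)"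
  using sum_products_squared_le[of "{0..<n}" "\<lambda>i. x $ i" "\<lambda>i. z $ i"] by (simp add: scalar_prod_def)

lemma scalar_prod_sym_mat:
  assumes S: "S \<in> carrier_mat n n" and "transpose_mat S = S"
    and x: "x \<in> carrier_vec n" and z: "z \<in> carrier_vec n"
  shows "(S *\<^sub>v x) \<bullet> z = x \<bullet> (S *\<^sub>v (z :: real vec))"
proof -
  have "(S *\<^sub>v x) \<bullet> z = z \<bullet> (S *\<^sub>v x)"
    by (rule comm_scalar_prod[OF mult_mat_vec_carrier[OF S x] z])
  also have "\<dots> = (transpose_mat S *\<^sub>v z) \<bullet> x" by (rule transpose_vec_mult_scalar[OF S x z, symmetric])
  also have "\<dots> = x \<bullet> (S *\<^sub>v z)" unfolding assms(2)
    by (rule comm_scalar_prod[OF mult_mat_vec_carrier[OF S z] x])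
  finally show ?thesis .
qed

lemma mult_mat_vec_entry_bound:
  assumes B: "(B :: real mat) \<in> carrier_mat n n" and a: "a \<in> carrier_vec n" and i: "i < n"
    and bound: "\<And>i j. i < n \<Longrightarrow> j < n \<Longrightarrow> \<bar>B $$ (i,j)\<bar> \<le> b"
  shows "\<bar>(B *\<^sub>v a) $ i\<bar> \<le> b * (\<Sum>j<n. \<bar>a $ j\<bar>)"
proof -
  have "(B *\<^sub>v a) $ i = (\<Sum>j<n. B $$ (i,j) * a $ j)"
    using B a i by (simp add: scalar_prod_def lessThan_atLeast0)
  also have "\<bar>\<dots>\<bar> \<le> (\<Sum>j<n. \<bar>B $$ (i,j) * a $ j\<bar>)" by (rule sum_abs)
  also have "\<dots> \<le> (\<Sum>j<n. b * \<bar>a $ j\<bar>)"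
    using bound i by (intro sum_mono) (auto simp: abs_mult intro: mult_right_mono)
  finally show ?thesis by (simp add: sum_distrib_left)
qed

lemma mult_mat_vec_diagonal:
  assumes X: "X \<in> carrier_mat n n" and u: "u \<in> carrier_vec n"
    and entries: "\<And>i j. i < n \<Longrightarrow> j < n \<Longrightarrow> X $$ (i,j) = (if i = j then x i else 0)"
  shows "X *\<^sub>v u = vec n (\<lambda>i. x i * u $ i)"
proof (rule eq_vecI)
  fix i assume "i < dim_vec (vec n (\<lambda>i. x i * u $ i))"
  then have i: "i < n" by simp
  have "(X *\<^sub>v u) $ i = (\<Sum>j\<in>{0..<n}. (if i = j then x i else 0) * u $ j)"
    using X u i entries by (simp add: scalar_prod_def)
  also have "\<dots> = (\<Sum>j\<in>{0..<n}. if i = j then x i * u $ j else 0)" by (rule sum.cong) auto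
  finally show "(X *\<^sub>v u) $ i = vec n (\<lambda>i. x i * u $ i) $ i" using i by simp
qed (use X in simp)

lemma smult_mat_mult_vec:
  "A \<in> carrier_mat m n \<Longrightarrow> v \<in> carrier_vec n \<Longrightarrow> (k \<cdot>\<^sub>m A) *\<^sub>v v = k \<cdot>\<^sub>v (A *\<^sub>v (v :: 'a :: comm_ring_1 vec))"
  by (rule eq_vecI) (auto simp: scalar_prod_def sum_distrib_left algebra_simps)

lemma shifted_mat_mult_vec:
  assumes A: "(A :: real mat) \<in> carrier_mat n n" and v: "v \<in> carrier_vec n"
  shows "(k \<cdot>\<^sub>m 1\<^sub>m n + A) *\<^sub>v v = k \<cdot>\<^sub>v v + A *\<^sub>v v"
    and "(k \<cdot>\<^sub>m 1\<^sub>m n - A) *\<^sub>v v = k \<cdot>\<^sub>v v - A *\<^sub>v v"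
    and "(A - k \<cdot>\<^sub>m 1\<^sub>m n) *\<^sub>v v = A *\<^sub>v v - k \<cdot>\<^sub>v v"
proof -
  have k: "k \<cdot>\<^sub>m 1\<^sub>m n \<in> carrier_mat n n" by simp
  have kv: "(k \<cdot>\<^sub>m 1\<^sub>m n) *\<^sub>v v = k \<cdot>\<^sub>v v" using smult_mat_mult_vec[OF one_carrier_mat v] v by simp
  show "(k \<cdot>\<^sub>m 1\<^sub>m n + A) *\<^sub>v v = k \<cdot>\<^sub>v v + A *\<^sub>v v"
    unfolding add_mult_distrib_mat_vec[OF k A v] kv ..
  show "(k \<cdot>\<^sub>m 1\<^sub>m n - A) *\<^sub>v v = k \<cdot>\<^sub>v v - A *\<^sub>v v"
    unfolding minus_mult_distrib_mat_vec[OF k A v] kv ..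
  show "(A - k \<cdot>\<^sub>m 1\<^sub>m n) *\<^sub>v v = A *\<^sub>v v - k \<cdot>\<^sub>v v"
    unfolding minus_mult_distrib_mat_vec[OF A k v] kv ..
qed

lemma smult_pow_mat:
  assumes A: "A \<in> carrier_mat n n"
  shows "(k \<cdot>\<^sub>m A) ^\<^sub>m j = (k ^ j) \<cdot>\<^sub>m (A ^\<^sub>m j :: 'a :: comm_ring_1 mat)"
proof (induct j)
  case 0
  then show ?case using A by (auto intro!: eq_matI)
next
  case (Suc j)
  have "(k \<cdot>\<^sub>m A) ^\<^sub>m Suc j = ((k ^ j) \<cdot>\<^sub>m (A ^\<^sub>m j)) * (k \<cdot>\<^sub>m A)" using Suc by simp
  also have "\<dots> = (k ^ j) \<cdot>\<^sub>m (A ^\<^sub>m j * (k \<cdot>\<^sub>m A))"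
  proof -
    have "k \<cdot>\<^sub>m A \<in> carrier_mat n n" using A by simp
    then show ?thesis by (rule mult_smult_assoc_mat[OF pow_carrier_mat[OF A]])
  qed
  also have "A ^\<^sub>m j * (k \<cdot>\<^sub>m A) = k \<cdot>\<^sub>m (A ^\<^sub>m j * A)"
    by (rule mult_smult_distrib[OF pow_carrier_mat[OF A] A])
  finally show ?case by (auto intro!: eq_matI)
qed

lemma mat_pow_mult_vec_funpow:
  assumes S: "S \<in> carrier_mat n n" and a: "a \<in> carrier_vec n"
  shows "(S ^\<^sub>m k) *\<^sub>v a = ((\<lambda>v. S *\<^sub>v v) ^^ k) a"
  using a
proof (induct k arbitrary: a)
  case 0
  then show ?case using S by (simp add: carrier_matD)
next
  case (Suc k)
  have "(S ^\<^sub>m Suc k) *\<^sub>v a = (S ^\<^sub>m k * S) *\<^sub>v a" by simp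
  also have "\<dots> = (S ^\<^sub>m k) *\<^sub>v (S *\<^sub>v a)" using S Suc.prems by (auto intro!: assoc_mult_mat_vec)
  also have "\<dots> = ((\<lambda>v. S *\<^sub>v v) ^^ k) (S *\<^sub>v a)" using Suc S by auto
  finally show ?case by (simp add: funpow_Suc_right del: funpow.simps)
qed

lemma funpow_mult_mat_vec_carrier:
  "S \<in> carrier_mat n n \<Longrightarrow> a \<in> carrier_vec n \<Longrightarrow> ((\<lambda>v. S *\<^sub>v v) ^^ k) a \<in> carrier_vec n"
  by (induct k) auto

lemma log_convex_seq_ge:
  fixes y :: "nat \<Rightarrow> real"
  assumes nonneg: "\<And>k. y k \<ge> 0" and y0: "y 0 > 0"
    and log_convex: "\<And>k. (y (Suc k))^2 \<le> y k * y (Suc (Suc k))"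
  shows "y k \<ge> (y 1 / y 0)^k * y 0"
proof -
  define p where "p = y 1 / y 0"
  have ratio: "y (Suc k) \<ge> p * y k" for k
  proof (induct k)
    case 0
    then show ?case unfolding p_def using y0 by simp
  next
    case (Suc k)
    show ?case
    proof (cases "y (Suc k) = 0")
      case True
      then show ?thesis using nonneg by simp
    next
      case False
      then have pos: "y (Suc k) > 0" using nonneg[of "Suc k"] by linarith
      have "y k \<noteq> 0" using log_convex[of k] False by auto
      then have pos': "y k > 0" using nonneg[of k] by linarith
      have "p * y (Suc k) \<le> (y (Suc k) / y k) * y (Suc k)"
        using Suc pos pos' by (intro mult_right_mono) (auto simp: field_simps)
      also have "\<dots> = (y (Suc k))^2 / y k" by (simp add: power2_eq_square)
      also have "\<dots> \<le> y (Suc (Suc k))" using log_convex[of k] pos' by (simp add: field_simps)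
      finally show ?thesis .
    qed
  qed
  have "p \<ge> 0" unfolding p_def using nonneg y0 by simp
  have "y k \<ge> p^k * y 0"
  proof (induct k)
    case (Suc k)
    have "p ^ Suc k * y 0 = p * (p^k * y 0)" by simp
    also have "\<dots> \<le> p * y k" using Suc \<open>p \<ge> 0\<close> by (rule mult_left_mono)
    also have "\<dots> \<le> y (Suc k)" by (rule ratio)
    finally show ?case .
  qed simp
  then show ?thesis unfolding p_def .
qed

lemma sym_mat_iterate_sqnorm_ge:
  assumes S: "S \<in> carrier_mat n n" and sym: "transpose_mat S = S"
    and a: "a \<in> carrier_vec n" and "a \<bullet> a > 0"
  shows "((\<lambda>v. S *\<^sub>v v) ^^ k) a \<bullet> ((\<lambda>v. S *\<^sub>v v) ^^ k) a
     \<ge> ((S *\<^sub>v a) \<bullet> (S *\<^sub>v a) / (a \<bullet> a))^k * (a \<bullet> (a :: real vec))"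
proof -
  define x where "x k = ((\<lambda>v. S *\<^sub>v v) ^^ k) a" for k
  have x: "x k \<in> carrier_vec n" for k unfolding x_def by (rule funpow_mult_mat_vec_carrier[OF S a])
  have x_Suc: "x (Suc k) = S *\<^sub>v x k" for k unfolding x_def by simp
  have "(x (Suc k) \<bullet> x (Suc k))^2 \<le> (x k \<bullet> x k) * (x (Suc (Suc k)) \<bullet> x (Suc (Suc k)))" for k
  proof -
    have "x (Suc k) \<bullet> x (Suc k) = x k \<bullet> x (Suc (Suc k))" unfolding x_Suc
      by (rule scalar_prod_sym_mat[OF S sym x mult_mat_vec_carrier[OF S x]])
    then show ?thesis using scalar_prod_squared_le[OF x x] by simp
  qed
  from log_convex_seq_ge[of "\<lambda>k. x k \<bullet> x k", OF scalar_prod_self_nonneg _ this]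
  show ?thesis using assms(4) unfolding x_def by simp
qed

section \<open>Complex eigenvectors of real matrices\<close>

definition sqnorm_cvec :: "complex vec \<Rightarrow> real" where
  "sqnorm_cvec v = (\<Sum>i<dim_vec v. (cmod (v $ i))^2)"

lemma sqnorm_cvec_Re_Im:
  "sqnorm_cvec v = map_vec Re v \<bullet> map_vec Re v + map_vec Im v \<bullet> map_vec Im v"
proof -
  have "sqnorm_cvec v = (\<Sum>i<dim_vec v. Re (v $ i) * Re (v $ i) + Im (v $ i) * Im (v $ i))"
    unfolding sqnorm_cvec_def cmod_power2 by (simp add: power2_eq_square)
  then show ?thesis by (simp add: scalar_prod_def sum.distrib lessThan_atLeast0)
qed

lemma sqnorm_cvec_smult: "sqnorm_cvec (c \<cdot>\<^sub>v v) = (cmod c)^2 * sqnorm_cvec v"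
  by (auto simp: sqnorm_cvec_def sum_distrib_left norm_mult power_mult_distrib)

lemma cvec_eq_0_iff_Re_Im:
  "v \<in> carrier_vec n \<Longrightarrow> v = 0\<^sub>v n \<longleftrightarrow> map_vec Re v = 0\<^sub>v n \<and> map_vec Im v = 0\<^sub>v n"
  by (auto simp: vec_eq_iff complex_eq_iff)

lemma sqnorm_cvec_pos:
  assumes v: "v \<in> carrier_vec n" and "v \<noteq> 0\<^sub>v n" shows "sqnorm_cvec v > 0"
  using assms cvec_eq_0_iff_Re_Im[OF v] scalar_prod_self_eq_0_iff[of "map_vec Re v" n]
    scalar_prod_self_eq_0_iff[of "map_vec Im v" n] scalar_prod_self_nonneg[of "map_vec Re v"]
    scalar_prod_self_nonneg[of "map_vec Im v"]
  unfolding sqnorm_cvec_Re_Im by fastforce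

lemma mult_mat_vec_of_real_Re_Im:
  assumes "A \<in> carrier_mat m n" and "v \<in> carrier_vec n"
  shows "map_vec Re (map_mat complex_of_real A *\<^sub>v v) = A *\<^sub>v map_vec Re v"
    and "map_vec Im (map_mat complex_of_real A *\<^sub>v v) = A *\<^sub>v map_vec Im v"
  using assms by (auto intro!: eq_vecI simp: scalar_prod_def Re_sum Im_sum)

lemma sym_mat_eigenvalue_real:
  assumes S: "S \<in> carrier_mat n n" and sym: "transpose_mat S = S"
    and "eigenvalue (map_mat complex_of_real S) l"
  shows "Im l = 0" and "eigenvalue S (Re l)"
proof -
  obtain v where v: "v \<in> carrier_vec n" and "v \<noteq> 0\<^sub>v n"
    and Sv: "map_mat complex_of_real S *\<^sub>v v = l \<cdot>\<^sub>v v"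
    using assms(3) S unfolding eigenvalue_def eigenvector_def by auto
  define x where "x = map_vec Re v"
  define y where "y = map_vec Im v"
  have x: "x \<in> carrier_vec n" and y: "y \<in> carrier_vec n" unfolding x_def y_def using v by auto
  have Sx: "S *\<^sub>v x = Re l \<cdot>\<^sub>v x - Im l \<cdot>\<^sub>v y" and Sy: "S *\<^sub>v y = Re l \<cdot>\<^sub>v y + Im l \<cdot>\<^sub>v x"
    using arg_cong[OF Sv, of "map_vec Re"] arg_cong[OF Sv, of "map_vec Im"] v
    unfolding x_def y_def mult_mat_vec_of_real_Re_Im[OF S v]
    by (auto intro!: eq_vecI simp: algebra_simps)
  have "(S *\<^sub>v x) \<bullet> y = Re l * (x \<bullet> y) - Im l * (y \<bullet> y)"
    unfolding Sx using x y by (simp add: scalar_prod_def sum_subtractf sum_distrib_left algebra_simps)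
  moreover have "x \<bullet> (S *\<^sub>v y) = Re l * (x \<bullet> y) + Im l * (x \<bullet> x)"
    unfolding Sy using x y by (simp add: scalar_prod_def sum.distrib sum_distrib_left algebra_simps)
  ultimately have "Im l * (x \<bullet> x + y \<bullet> y) = 0"
    using scalar_prod_sym_mat[OF S sym x y] by (simp add: algebra_simps)
  moreover have "x \<bullet> x + y \<bullet> y > 0"
    using sqnorm_cvec_pos[OF v \<open>v \<noteq> 0\<^sub>v n\<close>] unfolding sqnorm_cvec_Re_Im x_def y_def .
  ultimately show im: "Im l = 0" by simp
  have "x \<noteq> 0\<^sub>v n \<or> y \<noteq> 0\<^sub>v n"
    using cvec_eq_0_iff_Re_Im[OF v] \<open>v \<noteq> 0\<^sub>v n\<close> unfolding x_def y_def by simp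
  moreover have "S *\<^sub>v x = Re l \<cdot>\<^sub>v x" "S *\<^sub>v y = Re l \<cdot>\<^sub>v y"
    unfolding Sx Sy im using x y by (auto intro!: eq_vecI)
  ultimately show "eigenvalue S (Re l)"
    unfolding eigenvalue_def eigenvector_def using x y S by (auto simp: carrier_matD)
qed

lemma sym_mat_has_eigenvalue:
  assumes S: "(S :: real mat) \<in> carrier_mat n n" and "transpose_mat S = S" and "n > 0"
  obtains m where "eigenvalue S m"
proof -
  have "map_mat complex_of_real S \<in> carrier_mat n n" using S by simp
  from spectrum_non_empty[OF this \<open>n > 0\<close>] obtain l where "eigenvalue (map_mat complex_of_real S) l"
    unfolding spectrum_def by auto
  from sym_mat_eigenvalue_real(2)[OF S \<open>transpose_mat S = S\<close> this] that show ?thesis by blast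
qed

lemma spectral_radius_of_real_le:
  assumes S: "S \<in> carrier_mat n n" and "n > 0"
    and "\<And>l. eigenvalue (map_mat complex_of_real S) l \<Longrightarrow> cmod l \<le> r"
  shows "spectral_radius (map_mat complex_of_real S) \<le> r"
proof -
  have "map_mat complex_of_real S \<in> carrier_mat n n" using S by simp
  from spectral_radius_mem_max(1)[OF this \<open>n > 0\<close>] assms(3) show ?thesis
    unfolding spectrum_def by auto
qed

section \<open>Powers of a matrix with small eigenvalues\<close>

lemma mat_pow_entries_bound:
  assumes S: "S \<in> carrier_mat n n" and "n > 0" and r: "r > 0"
    and ev: "\<And>l. eigenvalue (map_mat complex_of_real S) l \<Longrightarrow> cmod l < r"
  obtains c where "\<And>k i j. i < n \<Longrightarrow> j < n \<Longrightarrow> \<bar>(S ^\<^sub>m k) $$ (i,j)\<bar> \<le> c * r ^ k"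
proof -
  define Sc where "Sc = map_mat complex_of_real S"
  define A where "A = complex_of_real (1 / r) \<cdot>\<^sub>m Sc"
  have Sc: "Sc \<in> carrier_mat n n" unfolding Sc_def using S by simp
  have A: "A \<in> carrier_mat n n" unfolding A_def using Sc by simp
  have "cmod l < 1" if "eigenvalue A l" for l
  proof -
    obtain v where v: "v \<in> carrier_vec n" "v \<noteq> 0\<^sub>v n" and Av: "A *\<^sub>v v = l \<cdot>\<^sub>v v"
      using \<open>eigenvalue A l\<close> A unfolding eigenvalue_def eigenvector_def by auto
    have "Sc *\<^sub>v v = complex_of_real r \<cdot>\<^sub>v (A *\<^sub>v v)"
      unfolding A_def smult_mat_mult_vec[OF Sc v(1)] using r by (auto intro!: eq_vecI)
    also have "\<dots> = (complex_of_real r * l) \<cdot>\<^sub>v v" unfolding Av by (auto simp: smult_smult_assoc)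
    finally have "eigenvalue Sc (complex_of_real r * l)"
      unfolding eigenvalue_def eigenvector_def using v Sc by (auto simp: carrier_matD)
    then have "r * cmod l < r * 1" using ev r unfolding Sc_def by (fastforce simp: norm_mult)
    then show ?thesis using r by simp
  qed
  then have "spectral_radius A < 1"
    using spectral_radius_mem_max(1)[OF A \<open>n > 0\<close>] unfolding spectrum_def by auto
  from spectral_radius_jnf_norm_bound_less_1_upper_triangular[OF A this]
  obtain c where c: "\<And>k. norm_bound (A ^\<^sub>m k) c" by auto
  have "\<bar>(S ^\<^sub>m k) $$ (i,j)\<bar> \<le> c * r ^ k" if ij: "i < n" "j < n" for k i j
  proof -
    have "A ^\<^sub>m k = complex_of_real (1 / r) ^ k \<cdot>\<^sub>m (Sc ^\<^sub>m k)"
      unfolding A_def by (rule smult_pow_mat[OF Sc])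
    also have "Sc ^\<^sub>m k = map_mat complex_of_real (S ^\<^sub>m k)"
      unfolding Sc_def by (rule of_real_hom.mat_hom_pow[OF S, symmetric])
    finally have "(A ^\<^sub>m k) $$ (i,j) = complex_of_real ((1/r)^k * (S ^\<^sub>m k) $$ (i,j))"
      using ij S by simp
    moreover have "cmod ((A ^\<^sub>m k) $$ (i,j)) \<le> c" using c[of k] ij A unfolding norm_bound_def by simp
    ultimately have "\<bar>(1/r)^k * (S ^\<^sub>m k) $$ (i,j)\<bar> \<le> c" by (simp only: norm_of_real)
    then have "(1/r)^k * \<bar>(S ^\<^sub>m k) $$ (i,j)\<bar> \<le> c" using r by (simp add: abs_mult)
    then show ?thesis using r by (simp add: field_simps power_divide)
  qed
  then show ?thesis using that by blast
qed

lemma mat_pow_mult_vec_sqnorm_le: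
  assumes S: "S \<in> carrier_mat n n" and a: "a \<in> carrier_vec n"
    and c: "\<And>k i j. i < n \<Longrightarrow> j < n \<Longrightarrow> \<bar>(S ^\<^sub>m k) $$ (i,j)\<bar> \<le> c * r ^ k"
  shows "((S ^\<^sub>m k) *\<^sub>v a) \<bullet> ((S ^\<^sub>m k) *\<^sub>v a) \<le> real n * (c * (\<Sum>j<n. \<bar>a $ j\<bar>))^2 * (r^2)^k"
proof -
  have "((S ^\<^sub>m k) *\<^sub>v a) \<bullet> ((S ^\<^sub>m k) *\<^sub>v a) \<le> real n * ((c * r^k) * (\<Sum>j<n. \<bar>a $ j\<bar>))^2"
    using S a by (intro scalar_prod_self_le mult_mat_vec_entry_bound[OF pow_carrier_mat[OF S] a] c)
      (auto intro: mult_mat_vec_carrier[OF pow_carrier_mat[OF S] a])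
  then show ?thesis by (simp add: power_mult_distrib power_mult[symmetric] mult_ac)
qed

text \<open>For symmetric \<open>S\<close> this replaces the spectral theorem: if \<open>\<parallel>S a\<parallel>\<^sup>2 > H \<parallel>a\<parallel>\<^sup>2\<close>, log-convexity
  makes \<open>\<parallel>S\<^sup>k a\<parallel>\<^sup>2\<close> grow at least like \<open>p\<^sup>k\<close> with \<open>p > H\<close>, while the eigenvalue bound makes it
  grow at most like \<open>r\<^sup>2\<^sup>k\<close> for any \<open>r\<^sup>2 > H\<close>.\<close>
lemma sym_mat_sqnorm_le:
  assumes S: "(S :: real mat) \<in> carrier_mat n n" and sym: "transpose_mat S = S" and "n > 0"
    and ev: "\<And>m. eigenvalue S m \<Longrightarrow> m^2 \<le> H"
    and a: "a \<in> carrier_vec n"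
  shows "(S *\<^sub>v a) \<bullet> (S *\<^sub>v a) \<le> H * (a \<bullet> a)"
proof (rule ccontr)
  assume "\<not> ?thesis"
  then have gt: "(S *\<^sub>v a) \<bullet> (S *\<^sub>v a) > H * (a \<bullet> a)" by simp
  obtain m where "eigenvalue S m" using sym_mat_has_eigenvalue[OF S sym \<open>n > 0\<close>] .
  then have "H \<ge> 0" using ev[of m] by (meson order_trans zero_le_power2)
  have "a \<noteq> 0\<^sub>v n" using gt S by (auto simp: scalar_prod_def)
  then have aa: "a \<bullet> a > 0"
    using scalar_prod_self_eq_0_iff[OF a] scalar_prod_self_nonneg[of a] by linarith
  define p where "p = (S *\<^sub>v a) \<bullet> (S *\<^sub>v a) / (a \<bullet> a)"
  have "p > H" unfolding p_def using gt aa by (simp add: field_simps)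
  define r where "r = sqrt ((H + p) / 2)"
  have r2: "r^2 = (H + p) / 2" and "r > 0" unfolding r_def using \<open>H \<ge> 0\<close> \<open>p > H\<close> by auto
  have "cmod l < r" if "eigenvalue (map_mat complex_of_real S) l" for l
  proof -
    have "l = complex_of_real (Re l)" using sym_mat_eigenvalue_real(1)[OF S sym that] by (simp add: complex_eq_iff)
    moreover have "\<bar>Re l\<bar>^2 < r^2" using ev[OF sym_mat_eigenvalue_real(2)[OF S sym that]] r2 \<open>p > H\<close> by simp
    ultimately show ?thesis using \<open>r > 0\<close> by (metis abs_ge_zero norm_of_real power2_less_imp_less less_imp_le)
  qed
  then obtain c where c: "\<And>k i j. i < n \<Longrightarrow> j < n \<Longrightarrow> \<bar>(S ^\<^sub>m k) $$ (i,j)\<bar> \<le> c * r ^ k"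
    using mat_pow_entries_bound[OF S \<open>n > 0\<close> \<open>r > 0\<close>] by blast
  define K where "K = real n * (c * (\<Sum>j<n. \<bar>a $ j\<bar>))^2 / (a \<bullet> a)"
  have "(p / r^2) ^ k \<le> K" for k
  proof -
    have "p^k * (a \<bullet> a) \<le> real n * (c * (\<Sum>j<n. \<bar>a $ j\<bar>))^2 * (r^2)^k"
      using sym_mat_iterate_sqnorm_ge[OF S sym a aa, of k] mat_pow_mult_vec_sqnorm_le[OF S a c, of k]
      unfolding p_def mat_pow_mult_vec_funpow[OF S a] by linarith
    then show ?thesis unfolding K_def using aa \<open>r > 0\<close> by (simp add: field_simps power_divide)
  qed
  moreover have "p / r^2 > 1" using r2 \<open>p > H\<close> \<open>r > 0\<close> by (simp add: field_simps)
  then obtain k where "K < (p / r^2) ^ k" using real_arch_pow by blast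
  ultimately show False by (meson not_le)
qed

text \<open>Completing the square reduces this to \<open>sym_mat_sqnorm_le\<close> for the shifted matrix \<open>S - (b/c) I\<close>.\<close>
lemma sym_mat_quadratic_form_nonpos:
  assumes S: "(S :: real mat) \<in> carrier_mat n n" and sym: "transpose_mat S = S" and "n > 0" and "c > 0"
    and ev: "\<And>\<mu>. eigenvalue S \<mu> \<Longrightarrow> c * \<mu>^2 - 2 * b * \<mu> + d \<le> 0"
    and a: "a \<in> carrier_vec n"
  shows "c * ((S *\<^sub>v a) \<bullet> (S *\<^sub>v a)) - 2 * b * (a \<bullet> (S *\<^sub>v a)) + d * (a \<bullet> a) \<le> 0"
proof -
  define m where "m = b / c"
  have cm: "c * m = b" unfolding m_def using \<open>c > 0\<close> by simp
  define H where "H = m^2 - d / c"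
  define S' where "S' = S - m \<cdot>\<^sub>m 1\<^sub>m n"
  have S': "S' \<in> carrier_mat n n" unfolding S'_def using S by (intro minus_carrier_mat) simp_all
  have "S $$ (j, i) = S $$ (i, j)" if "i < n" "j < n" for i j
    using arg_cong[OF sym, of "\<lambda>A. A $$ (i, j)"] that S by simp
  then have S'_sym: "transpose_mat S' = S'" using S by (intro eq_matI) (auto simp: S'_def)
  have S'_mult: "S' *\<^sub>v v = S *\<^sub>v v - m \<cdot>\<^sub>v v" if "v \<in> carrier_vec n" for v
    unfolding S'_def by (rule shifted_mat_mult_vec(3)[OF S that])
  have "l^2 \<le> H" if "eigenvalue S' l" for l
  proof -
    obtain v where v: "v \<in> carrier_vec n" "v \<noteq> 0\<^sub>v n" and "S' *\<^sub>v v = l \<cdot>\<^sub>v v"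
      using \<open>eigenvalue S' l\<close> S' unfolding eigenvalue_def eigenvector_def by auto
    then have "S *\<^sub>v v = (l + m) \<cdot>\<^sub>v v"
      unfolding S'_mult[OF v(1)] using S by (auto simp: vec_eq_iff algebra_simps)
    then have "c * (l + m)^2 - 2 * b * (l + m) + d \<le> 0"
      using v S by (intro ev) (auto simp: eigenvalue_def eigenvector_def)
    moreover have "c * (l + m)^2 - 2 * b * (l + m) + d = c * (l^2 - H)"
      unfolding H_def cm[symmetric] using \<open>c > 0\<close> by (simp add: power2_eq_square algebra_simps)
    ultimately show ?thesis using \<open>c > 0\<close> by (simp add: mult_le_0_iff)
  qed
  then have "(S' *\<^sub>v a) \<bullet> (S' *\<^sub>v a) \<le> H * (a \<bullet> a)" by (rule sym_mat_sqnorm_le[OF S' S'_sym \<open>n > 0\<close> _ a])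
  moreover have "(S' *\<^sub>v a) \<bullet> (S' *\<^sub>v a) = (S *\<^sub>v a) \<bullet> (S *\<^sub>v a) - 2 * m * (a \<bullet> (S *\<^sub>v a)) + m^2 * (a \<bullet> a)"
    unfolding S'_mult[OF a] using S a
    by (simp add: scalar_prod_def power2_eq_square algebra_simps sum.distrib sum_subtractf sum_distrib_left)
  ultimately have "c * ((S *\<^sub>v a) \<bullet> (S *\<^sub>v a) - 2 * m * (a \<bullet> (S *\<^sub>v a)) + m^2 * (a \<bullet> a)) \<le> c * (H * (a \<bullet> a))"
    using \<open>c > 0\<close> by simp
  then show ?thesis unfolding H_def cm[symmetric] using \<open>c > 0\<close> by (simp add: algebra_simps)
qed

lemma mat_pow_mult_vec_tendsto_zero:
  assumes S: "S \<in> carrier_mat n n" and a: "a \<in> carrier_vec n" and i: "i < n"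
    and rho: "spectral_radius (map_mat complex_of_real S) < 1"
  shows "(\<lambda>k. ((S ^\<^sub>m k) *\<^sub>v a) $ i) \<longlonglongrightarrow> 0"
proof -
  define r where "r = (1 + spectral_radius (map_mat complex_of_real S)) / 2"
  have "n > 0" using i by simp
  have "cmod l < r" if "eigenvalue (map_mat complex_of_real S) l" for l
    using spectral_radius_mem_max(2)[of "map_mat complex_of_real S" n "cmod l"] S \<open>n > 0\<close> that rho
    unfolding r_def spectrum_def by fastforce
  moreover have "spectral_radius (map_mat complex_of_real S) \<ge> 0"
    using spectral_radius_mem_max(1)[of "map_mat complex_of_real S" n] S \<open>n > 0\<close> by auto
  then have "r > 0" "r < 1" unfolding r_def using rho by auto
  ultimately obtain c where c: "\<And>k i j. i < n \<Longrightarrow> j < n \<Longrightarrow> \<bar>(S ^\<^sub>m k) $$ (i,j)\<bar> \<le> c * r ^ k"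
    using mat_pow_entries_bound[OF S \<open>n > 0\<close>] by blast
  define s where "s = (\<Sum>j<n. \<bar>a $ j\<bar>)"
  show ?thesis
  proof (rule tendsto_0_le[where K = "\<bar>c\<bar> * s"])
    show "(\<lambda>k. r ^ k) \<longlonglongrightarrow> 0" using \<open>r > 0\<close> \<open>r < 1\<close> by (intro LIMSEQ_power_zero) simp
    have "\<bar>((S ^\<^sub>m k) *\<^sub>v a) $ i\<bar> \<le> norm (r ^ k) * (\<bar>c\<bar> * s)" for k
    proof -
      have "\<bar>((S ^\<^sub>m k) *\<^sub>v a) $ i\<bar> \<le> (c * r^k) * s"
        unfolding s_def by (rule mult_mat_vec_entry_bound[OF pow_carrier_mat[OF S] a i c])
      also have "\<dots> \<le> \<bar>c\<bar> * r^k * s" using \<open>r > 0\<close> by (intro mult_right_mono) (auto simp: s_def sum_nonneg)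
      finally show ?thesis using \<open>r > 0\<close> by (simp add: mult_ac)
    qed
    then show "\<forall>\<^sub>F k in sequentially. norm (((S ^\<^sub>m k) *\<^sub>v a) $ i) \<le> norm (r ^ k) * (\<bar>c\<bar> * s)"
      by simp
  qed
qed

lemma affine_iteration_tendsto:
  assumes S: "S \<in> carrier_mat n n" and g: "g \<in> carrier_vec n"
    and x: "x \<in> carrier_vec n" and x0: "x0 \<in> carrier_vec n"
    and fixpoint: "S *\<^sub>v x + g = x"
    and rho: "spectral_radius (map_mat complex_of_real S) < 1"
  shows "vec_tendsto (\<lambda>k. ((\<lambda>v. S *\<^sub>v v + g) ^^ k) x0) x"
  unfolding vec_tendsto_def
proof (intro allI impI)
  fix i assume "i < dim_vec x"
  then have i: "i < n" using x by simp
  define it where "it k = ((\<lambda>v. S *\<^sub>v v + g) ^^ k) x0" for k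
  have it: "it k \<in> carrier_vec n" for k unfolding it_def by (induct k) (use x0 S g in auto)
  have err: "it k - x = ((\<lambda>v. S *\<^sub>v v) ^^ k) (x0 - x)" for k
  proof (induct k)
    case 0
    then show ?case unfolding it_def by simp
  next
    case (Suc k)
    have "it (Suc k) - x = S *\<^sub>v it k - S *\<^sub>v x"
    proof (rule eq_vecI)
      fix j assume "j < dim_vec (S *\<^sub>v it k - S *\<^sub>v x)"
      then have j: "j < n" using S by simp
      have "x $ j = (S *\<^sub>v x) $ j + g $ j" using arg_cong[OF fixpoint, of "\<lambda>v. v $ j"] j S g by simp
      then show "(it (Suc k) - x) $ j = (S *\<^sub>v it k - S *\<^sub>v x) $ j"
        unfolding it_def using j S g x it[of k] by (simp add: it_def)
    qed (use S x in simp)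
    also have "\<dots> = S *\<^sub>v (it k - x)" by (rule mult_minus_distrib_mat_vec[symmetric, OF S it x])
    finally show ?case unfolding Suc by simp
  qed
  have "it k - x = (S ^\<^sub>m k) *\<^sub>v (x0 - x)" for k
    unfolding err using mat_pow_mult_vec_funpow[OF S, of "x0 - x"] x x0 by simp
  then have "(\<lambda>k. (it k - x) $ i) \<longlonglongrightarrow> 0"
    using mat_pow_mult_vec_tendsto_zero[OF S _ i rho] x x0 by simp
  then have "(\<lambda>k. (it k - x) $ i + x $ i) \<longlonglongrightarrow> 0 + x $ i" by (intro tendsto_add) auto
  moreover have "(it k - x) $ i + x $ i = it k $ i" for k using it x i by simp
  ultimately show "(\<lambda>k. ((\<lambda>v. S *\<^sub>v v + g) ^^ k) x0 $ i) \<longlonglongrightarrow> x $ i" unfolding it_def by simp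
qed

lemma inv_mat_if_kernel_trivial:
  assumes A: "(A :: real mat) \<in> carrier_mat n n"
    and kernel: "\<And>v. v \<in> carrier_vec n \<Longrightarrow> A *\<^sub>v v = 0\<^sub>v n \<Longrightarrow> v = 0\<^sub>v n"
  shows "invertible_mat A" and "inv_mat A \<in> carrier_mat n n"
    and "A * inv_mat A = 1\<^sub>m n" and "inv_mat A * A = 1\<^sub>m n"
proof -
  have "det A \<noteq> 0" using det_0_iff_vec_prod_zero[OF A] kernel by blast
  from det_non_zero_imp_unit[OF A this, of "()"]
  obtain B where B: "B \<in> carrier_mat n n" "B * A = 1\<^sub>m n" "A * B = 1\<^sub>m n"
    unfolding Units_def by (auto simp: ring_mat_simps)
  then show "invertible_mat A" unfolding invertible_mat_def inverts_mat_def
    using A by (auto simp: square_mat.simps intro!: exI[of _ B])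
  have "\<exists>B. B \<in> carrier_mat (dim_row A) (dim_row A) \<and> A * B = 1\<^sub>m (dim_row A) \<and> B * A = 1\<^sub>m (dim_row A)"
    using A B by auto
  from someI_ex[OF this] show "inv_mat A \<in> carrier_mat n n" "A * inv_mat A = 1\<^sub>m n" "inv_mat A * A = 1\<^sub>m n"
    unfolding inv_mat_def using A by auto
qed

section \<open>The splitting iteration\<close>

lemma sum_rotated_squares_eq:
  fixes A B TA TB :: "nat \<Rightarrow> real"
  assumes s: "s * s = 1" and sym: "(\<Sum>i<n. TA i * B i) = (\<Sum>i<n. A i * TB i)"
  shows "(\<Sum>i<n. (w * A i + s * (TA i - B i))^2) + (\<Sum>i<n. (w * B i + s * (A i + TB i))^2)
    = (\<Sum>i<n. (w * A i + s * TA i)^2 + (A i)^2) + (\<Sum>i<n. (w * B i + s * TB i)^2 + (B i)^2)"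
proof -
  have "(w * A i + s * (TA i - B i))^2 + (w * B i + s * (A i + TB i))^2
     = ((w * A i + s * TA i)^2 + (A i)^2) + ((w * B i + s * TB i)^2 + (B i)^2)
       + 2 * (A i * TB i - TA i * B i)" (is "_ = ?rhs i") for i
  proof -
    have "(w * A i + s * (TA i - B i))^2 + (w * B i + s * (A i + TB i))^2
      = (w * A i + s * TA i)^2 + (s*s) * (B i)^2 + (w * B i + s * TB i)^2 + (s*s) * (A i)^2
        + 2 * (s * s) * (A i * TB i - TA i * B i)"
      by (simp add: power2_eq_square algebra_simps)
    then show ?thesis using s by simp
  qed
  then have "(\<Sum>i<n. (w * A i + s * (TA i - B i))^2) + (\<Sum>i<n. (w * B i + s * (A i + TB i))^2)
    = (\<Sum>i<n. ?rhs i)"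
    by (simp only: sum.distrib[symmetric])
  also have "\<dots> = (\<Sum>i<n. (w * A i + s * TA i)^2 + (A i)^2) + (\<Sum>i<n. (w * B i + s * TB i)^2 + (B i)^2)
      + 2 * ((\<Sum>i<n. A i * TB i) - (\<Sum>i<n. TA i * B i))"
    by (simp add: sum.distrib sum_subtractf sum_distrib_left)
  finally show ?thesis using sym by simp
qed

locale splitting_iteration =
  fixes T D :: "real mat" and M :: nat and \<omega> :: real
  assumes M_pos: "M > 0"
    and T_spd: "spd_mat M T"
    and D_carrier: "D \<in> carrier_mat M M" and D_diagonal: "diagonal_mat D"
    and D_nonpos: "\<forall>i < M. D $$ (i, i) \<le> 0"
    and \<omega>_pos: "\<omega> > 0"
begin

lemma T_carrier: "T \<in> carrier_mat M M"
  and T_sym: "transpose_mat T = T"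
  and T_pos: "\<And>x. x \<in> carrier_vec M \<Longrightarrow> x \<noteq> 0\<^sub>v M \<Longrightarrow> x \<bullet> (T *\<^sub>v x) > 0"
  using T_spd unfolding spd_mat_def by auto

lemma dim_D [simp]: "dim_row D = M" "dim_col D = M"
  and dim_T [simp]: "dim_row T = M" "dim_col T = M"
  using D_carrier T_carrier by auto

definition Bplus :: "real mat" where "Bplus = \<omega> \<cdot>\<^sub>m 1\<^sub>m (2 * M) + Bblk D"
definition Bminus :: "real mat" where "Bminus = \<omega> \<cdot>\<^sub>m 1\<^sub>m (2 * M) - Bblk D"
definition Hplus :: "real mat" where "Hplus = \<omega> \<cdot>\<^sub>m 1\<^sub>m (2 * M) + Hblk T"
definition Hminus :: "real mat" where "Hminus = \<omega> \<cdot>\<^sub>m 1\<^sub>m (2 * M) - Hblk T"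

abbreviation L :: "real mat" where "L \<equiv> Lmat \<omega> T D"
abbreviation F :: "real mat" where "F \<equiv> Fmat \<omega> T D"
abbreviation G :: "real mat" where "G \<equiv> Gmat \<omega> T D"
abbreviation R :: "real mat" where "R \<equiv> Rblk T D"

lemma Bblk_carrier: "Bblk D \<in> carrier_mat (2*M) (2*M)"
  and Hblk_carrier: "Hblk T \<in> carrier_mat (2*M) (2*M)"
  unfolding Bblk_def Hblk_def using D_carrier T_carrier by (auto simp: mult_2)

lemma shifted_carrier:
  "Bplus \<in> carrier_mat (2*M) (2*M)" "Bminus \<in> carrier_mat (2*M) (2*M)"
  "Hplus \<in> carrier_mat (2*M) (2*M)" "Hminus \<in> carrier_mat (2*M) (2*M)"
  unfolding Bplus_def Bminus_def Hplus_def Hminus_def using Bblk_carrier Hblk_carrier by auto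

definition Ddiag2 :: "nat \<Rightarrow> real" where "Ddiag2 i = D $$ (i mod M, i mod M)"

lemma Bblk_index:
  assumes "i < 2*M" and "j < 2*M"
  shows "Bblk D $$ (i,j) = (if i = j then - Ddiag2 i else 0)"
proof -
  have "D $$ (i,j) = 0" if "i < M" "j < M" "i \<noteq> j" for i j
    using D_diagonal that unfolding diagonal_mat_def by simp
  then show ?thesis unfolding Bblk_def Ddiag2_def using assms by (auto simp: mult_2 le_mod_geq)
qed

lemma Bblk_mult_vec: "u \<in> carrier_vec (2*M) \<Longrightarrow> Bblk D *\<^sub>v u = vec (2*M) (\<lambda>i. - Ddiag2 i * u $ i)"
  by (rule mult_mat_vec_diagonal[OF Bblk_carrier]) (auto simp: Bblk_index)

lemma Bplus_mult_vec: "u \<in> carrier_vec (2*M) \<Longrightarrow> Bplus *\<^sub>v u = vec (2*M) (\<lambda>i. (\<omega> - Ddiag2 i) * u $ i)"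
  by (rule mult_mat_vec_diagonal[OF shifted_carrier(1)])
    (auto simp: Bplus_def Bblk_index carrier_matD[OF Bblk_carrier])

lemma Bminus_mult_vec: "u \<in> carrier_vec (2*M) \<Longrightarrow> Bminus *\<^sub>v u = vec (2*M) (\<lambda>i. (\<omega> + Ddiag2 i) * u $ i)"
  by (rule mult_mat_vec_diagonal[OF shifted_carrier(2)])
    (auto simp: Bminus_def Bblk_index carrier_matD[OF Bblk_carrier])

lemma Ddiag2_nonpos: "Ddiag2 i \<le> 0"
  using D_nonpos M_pos unfolding Ddiag2_def by simp

lemma eigenvalue_D_Ddiag2: "eigenvalue D (Ddiag2 i)"
proof -
  define k where "k = i mod M"
  have k: "k < M" using M_pos unfolding k_def by simp
  have "D *\<^sub>v unit_vec M k = vec M (\<lambda>j. D $$ (j,j) * unit_vec M k $ j)"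
    using D_diagonal by (intro mult_mat_vec_diagonal[OF D_carrier]) (auto simp: diagonal_mat_def)
  also have "\<dots> = Ddiag2 i \<cdot>\<^sub>v unit_vec M k" unfolding Ddiag2_def k_def[symmetric]
    by (rule eq_vecI) (auto simp: k)
  finally show ?thesis unfolding eigenvalue_def eigenvector_def
    using k by (auto intro!: exI[of _ "unit_vec M k"] simp: vec_eq_iff)
qed

lemma eigenvalue_D_nonpos:
  assumes "eigenvalue D l" shows "l \<le> 0"
proof -
  obtain v where v: "v \<in> carrier_vec M" "v \<noteq> 0\<^sub>v M" and Dv: "D *\<^sub>v v = l \<cdot>\<^sub>v v"
    using assms unfolding eigenvalue_def eigenvector_def by auto
  obtain k where k: "k < M" and "v $ k \<noteq> 0" using v by (auto simp: vec_eq_iff)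
  have "D *\<^sub>v v = vec M (\<lambda>j. D $$ (j,j) * v $ j)"
    using D_diagonal by (intro mult_mat_vec_diagonal[OF D_carrier v(1)]) (auto simp: diagonal_mat_def)
  then have "l = D $$ (k,k)" using arg_cong[OF Dv, of "\<lambda>u. u $ k"] k v \<open>v $ k \<noteq> 0\<close> by simp
  then show ?thesis using D_nonpos k by simp
qed

definition shifted_T_sqnorm :: "real \<Rightarrow> real vec \<Rightarrow> real" where
  "shifted_T_sqnorm s a = (\<Sum>i<M. (\<omega> * a $ i + s * (T *\<^sub>v a) $ i)^2 + (a $ i)^2)"

lemma shifted_T_sqnorm_ge: "a \<in> carrier_vec M \<Longrightarrow> shifted_T_sqnorm s a \<ge> a \<bullet> a"
  unfolding shifted_T_sqnorm_def scalar_prod_self_sum_squares by (intro sum_mono) simp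

lemma Hplus_Hminus_eq:
  "Hplus = \<omega> \<cdot>\<^sub>m 1\<^sub>m (2 * M) + 1 \<cdot>\<^sub>m Hblk T" "Hminus = \<omega> \<cdot>\<^sub>m 1\<^sub>m (2 * M) + (-1) \<cdot>\<^sub>m Hblk T"
  unfolding Hplus_def Hminus_def using Hblk_carrier by (auto intro!: eq_matI)

lemma shifted_Hblk_sqnorm:
  assumes u: "u \<in> carrier_vec (2*M)" and s: "s * s = 1"
  defines "X \<equiv> \<omega> \<cdot>\<^sub>m 1\<^sub>m (2 * M) + s \<cdot>\<^sub>m Hblk T"
  shows "(X *\<^sub>v u) \<bullet> (X *\<^sub>v u) = shifted_T_sqnorm s (vec_first u M) + shifted_T_sqnorm s (vec_last u M)"
proof -
  define a where "a = vec_first u M"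
  define b where "b = vec_last u M"
  have a: "a \<in> carrier_vec M" and b: "b \<in> carrier_vec M" unfolding a_def b_def by auto
  have u_ab: "u = a @\<^sub>v b" unfolding a_def b_def using u by (simp add: mult_2)
  have Ta: "T *\<^sub>v a \<in> carrier_vec M" and Tb: "T *\<^sub>v b \<in> carrier_vec M" using T_carrier a b by auto
  have "Hblk T *\<^sub>v u = (T *\<^sub>v a + (- 1\<^sub>m M) *\<^sub>v b) @\<^sub>v (1\<^sub>m M *\<^sub>v a + T *\<^sub>v b)"
    unfolding Hblk_def dim_T u_ab
    by (rule four_block_mat_mult_vec[OF T_carrier _ _ T_carrier a b]) auto
  also have "\<dots> = (T *\<^sub>v a - b) @\<^sub>v (a + T *\<^sub>v b)" using a b Ta Tb by (auto intro!: eq_vecI)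
  finally have "X *\<^sub>v u = \<omega> \<cdot>\<^sub>v (a @\<^sub>v b) + s \<cdot>\<^sub>v ((T *\<^sub>v a - b) @\<^sub>v (a + T *\<^sub>v b))"
    unfolding X_def shifted_mat_mult_vec(1)[OF smult_carrier_mat[OF Hblk_carrier] u]
      smult_mat_mult_vec[OF Hblk_carrier u] u_ab[symmetric] by simp
  also have "\<dots> = vec M (\<lambda>i. \<omega> * a $ i + s * ((T *\<^sub>v a) $ i - b $ i))
                    @\<^sub>v vec M (\<lambda>i. \<omega> * b $ i + s * (a $ i + (T *\<^sub>v b) $ i))"
    using a b Ta Tb by (auto intro!: eq_vecI)
  finally have "(X *\<^sub>v u) \<bullet> (X *\<^sub>v u) = (\<Sum>i<M. (\<omega> * a $ i + s * ((T *\<^sub>v a) $ i - b $ i))^2)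
      + (\<Sum>i<M. (\<omega> * b $ i + s * (a $ i + (T *\<^sub>v b) $ i))^2)"
    by (simp add: scalar_prod_append[of _ M _ M] scalar_prod_self_sum_squares)
  also have "\<dots> = shifted_T_sqnorm s a + shifted_T_sqnorm s b"
    unfolding shifted_T_sqnorm_def
  proof (rule sum_rotated_squares_eq[OF s])
    show "(\<Sum>i<M. (T *\<^sub>v a) $ i * b $ i) = (\<Sum>i<M. a $ i * (T *\<^sub>v b) $ i)"
      using scalar_prod_sym_mat[OF T_carrier T_sym a b] a b Ta Tb
      by (simp add: scalar_prod_def lessThan_atLeast0)
  qed
  finally show ?thesis unfolding a_def b_def .
qed

lemma Hplus_sqnorm:
  "u \<in> carrier_vec (2*M) \<Longrightarrow>
    (Hplus *\<^sub>v u) \<bullet> (Hplus *\<^sub>v u) = shifted_T_sqnorm 1 (vec_first u M) + shifted_T_sqnorm 1 (vec_last u M)"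
  unfolding Hplus_Hminus_eq by (rule shifted_Hblk_sqnorm) auto

lemma Hminus_sqnorm:
  "u \<in> carrier_vec (2*M) \<Longrightarrow>
    (Hminus *\<^sub>v u) \<bullet> (Hminus *\<^sub>v u) = shifted_T_sqnorm (-1) (vec_first u M) + shifted_T_sqnorm (-1) (vec_last u M)"
  unfolding Hplus_Hminus_eq by (rule shifted_Hblk_sqnorm) auto

lemma eigenvalue_T_pos:
  assumes "eigenvalue T m" shows "m > 0"
proof -
  obtain v where v: "v \<in> carrier_vec M" "v \<noteq> 0\<^sub>v M" and Tv: "T *\<^sub>v v = m \<cdot>\<^sub>v v"
    using assms unfolding eigenvalue_def eigenvector_def by auto
  have "0 < v \<bullet> (T *\<^sub>v v)" by (rule T_pos[OF v])
  also have "\<dots> = m * (v \<bullet> v)" unfolding Tv using v by simp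
  finally show ?thesis using scalar_prod_self_nonneg[of v] by (simp add: zero_less_mult_iff)
qed

definition contraction_B :: real where
  "contraction_B = Max ((\<lambda>l. \<bar>(\<omega> + l) / (\<omega> - l)\<bar>) ` {l. eigenvalue D l})"

definition contraction_H :: real where
  "contraction_H = Max ((\<lambda>m. sqrt (((\<omega> - m)^2 + 1) / ((\<omega> + m)^2 + 1))) ` {m. eigenvalue T m})"

lemma sigma_eq: "sigma \<omega> T D = contraction_B * contraction_H"
  unfolding sigma_def contraction_B_def contraction_H_def ..

lemma finite_eigenvalues: "finite {l. eigenvalue D l}" "finite {m. eigenvalue T m}"
  using card_finite_spectrum(1)[OF D_carrier] card_finite_spectrum(1)[OF T_carrier]
  unfolding spectrum_def by simp_all

lemma contraction_B_ge: "\<bar>(\<omega> + Ddiag2 i) / (\<omega> - Ddiag2 i)\<bar> \<le> contraction_B"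
  unfolding contraction_B_def by (rule Max_ge) (use finite_eigenvalues eigenvalue_D_Ddiag2 in auto)

lemma contraction_B_nonneg: "contraction_B \<ge> 0"
  using contraction_B_ge[of 0] by linarith

lemma contraction_B_le_1: "contraction_B \<le> 1"
  unfolding contraction_B_def
proof (rule Max.boundedI)
  fix a assume "a \<in> (\<lambda>l. \<bar>(\<omega> + l) / (\<omega> - l)\<bar>) ` {l. eigenvalue D l}"
  then obtain l where "eigenvalue D l" and a: "a = \<bar>(\<omega> + l) / (\<omega> - l)\<bar>" by auto
  have "l \<le> 0" using \<open>eigenvalue D l\<close> by (rule eigenvalue_D_nonpos)
  then show "a \<le> 1" unfolding a using \<omega>_pos by (simp add: abs_divide divide_le_eq_1_pos)
qed (use finite_eigenvalues eigenvalue_D_Ddiag2 in auto)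

lemma contraction_H_ge:
  assumes "eigenvalue T m" shows "sqrt (((\<omega> - m)^2 + 1) / ((\<omega> + m)^2 + 1)) \<le> contraction_H"
  unfolding contraction_H_def by (rule Max_ge) (use finite_eigenvalues assms in auto)

lemma contraction_H_eigenvalue:
  assumes "eigenvalue T m" shows "(\<omega> - m)^2 + 1 \<le> contraction_H^2 * ((\<omega> + m)^2 + 1)"
proof -
  define f where "f = ((\<omega> - m)^2 + 1) / ((\<omega> + m)^2 + 1)"
  have den: "(\<omega> + m)^2 + 1 > 0" by (simp add: add_nonneg_pos)
  then have "f \<ge> 0" unfolding f_def by (simp add: add_nonneg_nonneg)
  moreover have "sqrt f \<le> contraction_H" unfolding f_def by (rule contraction_H_ge[OF assms])
  ultimately have "f \<le> contraction_H^2" by (metis real_sqrt_le_iff real_sqrt_unique order_trans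
        real_sqrt_ge_zero real_le_rsqrt)
  then show ?thesis unfolding f_def using den by (simp add: field_simps)
qed

lemma eigenvalue_T_exists: obtains m where "eigenvalue T m"
  using sym_mat_has_eigenvalue[OF T_carrier T_sym M_pos] .

lemma contraction_H_nonneg: "contraction_H \<ge> 0"
proof -
  obtain m where "eigenvalue T m" by (rule eigenvalue_T_exists)
  from contraction_H_ge[OF this] show ?thesis by (meson order_trans real_sqrt_ge_zero
        divide_nonneg_nonneg add_nonneg_nonneg zero_le_power2 zero_le_one)
qed

lemma contraction_H_lt_1: "contraction_H < 1"
  unfolding contraction_H_def
proof (subst Max_less_iff)
  show "\<forall>a\<in>(\<lambda>m. sqrt (((\<omega> - m)^2 + 1) / ((\<omega> + m)^2 + 1))) ` {m. eigenvalue T m}. a < 1"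
  proof
    fix a assume "a \<in> (\<lambda>m. sqrt (((\<omega> - m)^2 + 1) / ((\<omega> + m)^2 + 1))) ` {m. eigenvalue T m}"
    then obtain m where "eigenvalue T m" and a: "a = sqrt (((\<omega> - m)^2 + 1) / ((\<omega> + m)^2 + 1))" by auto
    then have "m > 0" by (intro eigenvalue_T_pos)
    then have "(\<omega> - m)^2 + 1 < (\<omega> + m)^2 + 1" using \<omega>_pos by (simp add: power2_eq_square algebra_simps)
    moreover have "(\<omega> + m)^2 + 1 > 0" by (simp add: add_nonneg_pos)
    ultimately show "a < 1" unfolding a by (simp add: divide_less_eq)
  qed
qed (use finite_eigenvalues eigenvalue_T_exists in auto)

lemma sigma_nonneg: "sigma \<omega> T D \<ge> 0"
  unfolding sigma_eq using contraction_B_nonneg contraction_H_nonneg by simp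

lemma sigma_lt_1: "sigma \<omega> T D < 1"
proof -
  have "contraction_B * contraction_H \<le> 1 * contraction_H"
    using contraction_B_le_1 contraction_H_nonneg by (rule mult_right_mono)
  then show ?thesis unfolding sigma_eq using contraction_H_lt_1 by simp
qed

lemma Bminus_sqnorm_le:
  assumes u: "u \<in> carrier_vec (2*M)"
  shows "(Bminus *\<^sub>v u) \<bullet> (Bminus *\<^sub>v u) \<le> contraction_B^2 * ((Bplus *\<^sub>v u) \<bullet> (Bplus *\<^sub>v u))"
proof -
  have "((\<omega> + Ddiag2 i) * u $ i)^2 \<le> contraction_B^2 * ((\<omega> - Ddiag2 i) * u $ i)^2" for i
  proof -
    have pos: "\<omega> - Ddiag2 i > 0" using Ddiag2_nonpos[of i] \<omega>_pos by simp
    have "\<bar>\<omega> + Ddiag2 i\<bar> = \<bar>(\<omega> + Ddiag2 i) / (\<omega> - Ddiag2 i)\<bar> * (\<omega> - Ddiag2 i)"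
      using pos by (simp add: abs_divide)
    also have "\<dots> \<le> contraction_B * (\<omega> - Ddiag2 i)"
      by (intro mult_right_mono contraction_B_ge) (use pos in simp)
    finally have "\<bar>\<omega> + Ddiag2 i\<bar>^2 \<le> (contraction_B * (\<omega> - Ddiag2 i))^2" by (rule power_mono) simp
    then have "(\<omega> + Ddiag2 i)^2 * (u $ i)^2 \<le> (contraction_B * (\<omega> - Ddiag2 i))^2 * (u $ i)^2"
      by (intro mult_right_mono) auto
    then show ?thesis by (simp add: power_mult_distrib mult.assoc)
  qed
  then show ?thesis
    unfolding Bminus_mult_vec[OF u] Bplus_mult_vec[OF u] scalar_prod_self_sum_squares[OF vec_carrier]
    by (simp add: sum_distrib_left sum_mono)
qed

lemma shifted_T_sqnorm_eq:
  "a \<in> carrier_vec M \<Longrightarrow> shifted_T_sqnorm s a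
     = s^2 * ((T *\<^sub>v a) \<bullet> (T *\<^sub>v a)) + 2 * s * \<omega> * (a \<bullet> (T *\<^sub>v a)) + (\<omega>^2 + 1) * (a \<bullet> a)"
  unfolding shifted_T_sqnorm_def using T_carrier
  by (simp add: scalar_prod_def lessThan_atLeast0 power2_eq_square algebra_simps sum.distrib sum_distrib_left)

lemma shifted_T_sqnorm_contraction:
  assumes a: "a \<in> carrier_vec M"
  shows "shifted_T_sqnorm (-1) a \<le> contraction_H^2 * shifted_T_sqnorm 1 a"
proof -
  define \<beta> where "\<beta> = contraction_H"
  have "\<beta> * \<beta> \<le> \<beta> * 1"
    using contraction_H_lt_1 contraction_H_nonneg unfolding \<beta>_def by (intro mult_left_mono) auto
  then have c: "1 - \<beta>^2 > 0" using contraction_H_lt_1 unfolding \<beta>_def by (simp add: power2_eq_square)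
  have "(1 - \<beta>^2) * \<mu>^2 - 2 * (\<omega> * (1 + \<beta>^2)) * \<mu> + (1 - \<beta>^2) * (\<omega>^2 + 1) \<le> 0"
    if "eigenvalue T \<mu>" for \<mu>
    using contraction_H_eigenvalue[OF that] unfolding \<beta>_def[symmetric]
    by (simp add: power2_eq_square algebra_simps)
  from sym_mat_quadratic_form_nonpos[OF T_carrier T_sym M_pos c this a]
  show ?thesis unfolding \<beta>_def[symmetric] shifted_T_sqnorm_eq[OF a] by (simp add: algebra_simps)
qed

lemma Hminus_sqnorm_le:
  "u \<in> carrier_vec (2*M) \<Longrightarrow>
    (Hminus *\<^sub>v u) \<bullet> (Hminus *\<^sub>v u) \<le> contraction_H^2 * ((Hplus *\<^sub>v u) \<bullet> (Hplus *\<^sub>v u))"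
  unfolding Hminus_sqnorm Hplus_sqnorm
  using shifted_T_sqnorm_contraction[of "vec_first u M"] shifted_T_sqnorm_contraction[of "vec_last u M"]
  by (simp add: distrib_left)

lemma Bplus_kernel:
  assumes v: "v \<in> carrier_vec (2*M)" and "Bplus *\<^sub>v v = 0\<^sub>v (2*M)" shows "v = 0\<^sub>v (2*M)"
proof (rule eq_vecI)
  fix i assume "i < dim_vec (0\<^sub>v (2*M) :: real vec)"
  then have i: "i < 2*M" by simp
  have "(\<omega> - Ddiag2 i) * v $ i = 0"
    using arg_cong[OF assms(2), of "\<lambda>u. u $ i"] i unfolding Bplus_mult_vec[OF v] by simp
  moreover have "\<omega> - Ddiag2 i > 0" using Ddiag2_nonpos[of i] \<omega>_pos by simp
  ultimately show "v $ i = 0\<^sub>v (2*M) $ i" using i by simp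
qed (use v in simp)

lemma Hplus_kernel:
  assumes v: "v \<in> carrier_vec (2*M)" and "Hplus *\<^sub>v v = 0\<^sub>v (2*M)" shows "v = 0\<^sub>v (2*M)"
proof -
  define a where "a = vec_first v M"
  define b where "b = vec_last v M"
  have a: "a \<in> carrier_vec M" and b: "b \<in> carrier_vec M" unfolding a_def b_def by auto
  have "shifted_T_sqnorm 1 a + shifted_T_sqnorm 1 b = 0"
    using Hplus_sqnorm[OF v] assms(2) unfolding a_def b_def by simp
  then have "a \<bullet> a + b \<bullet> b \<le> 0" using shifted_T_sqnorm_ge[OF a, where s=1] shifted_T_sqnorm_ge[OF b, where s=1]
    by linarith
  then have "a = 0\<^sub>v M" "b = 0\<^sub>v M"
    using scalar_prod_self_nonneg[of a] scalar_prod_self_nonneg[of b]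
      scalar_prod_self_eq_0_iff[OF a] scalar_prod_self_eq_0_iff[OF b] by linarith+
  moreover have "v = a @\<^sub>v b" unfolding a_def b_def using v by (simp add: mult_2)
  ultimately show ?thesis by (auto intro!: eq_vecI simp: mult_2)
qed

lemma Bplus_inv:
  "invertible_mat Bplus" "inv_mat Bplus \<in> carrier_mat (2*M) (2*M)"
  "Bplus * inv_mat Bplus = 1\<^sub>m (2*M)" "inv_mat Bplus * Bplus = 1\<^sub>m (2*M)"
  by (rule inv_mat_if_kernel_trivial[OF shifted_carrier(1) Bplus_kernel]; assumption)+

lemma Hplus_inv:
  "invertible_mat Hplus" "inv_mat Hplus \<in> carrier_mat (2*M) (2*M)"
  "Hplus * inv_mat Hplus = 1\<^sub>m (2*M)" "inv_mat Hplus * Hplus = 1\<^sub>m (2*M)"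
  by (rule inv_mat_if_kernel_trivial[OF shifted_carrier(3) Hplus_kernel]; assumption)+

lemma Bplus_inv_mult_vec: "v \<in> carrier_vec (2*M) \<Longrightarrow> Bplus *\<^sub>v (inv_mat Bplus *\<^sub>v v) = v"
  using Bplus_inv assoc_mult_mat_vec[OF shifted_carrier(1) Bplus_inv(2), of v, symmetric] by simp

lemma Hplus_inv_mult_vec: "v \<in> carrier_vec (2*M) \<Longrightarrow> Hplus *\<^sub>v (inv_mat Hplus *\<^sub>v v) = v"
  using Hplus_inv assoc_mult_mat_vec[OF shifted_carrier(3) Hplus_inv(2), of v, symmetric] by simp

lemma L_eq: "L = inv_mat Hplus * Bminus * inv_mat Bplus * Hminus"
  unfolding Lmat_def Let_def Bplus_def Hplus_def Bminus_def Hminus_def dim_D ..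

lemma L_carrier: "L \<in> carrier_mat (2*M) (2*M)"
  unfolding L_eq using Bplus_inv(2) Hplus_inv(2) shifted_carrier by (metis mult_carrier_mat)

lemma L_mult_vec:
  assumes v: "v \<in> carrier_vec (2*M)"
  shows "L *\<^sub>v v = inv_mat Hplus *\<^sub>v (Bminus *\<^sub>v (inv_mat Bplus *\<^sub>v (Hminus *\<^sub>v v)))"
proof -
  note carriers = Bplus_inv(2) Hplus_inv(2) shifted_carrier
  have "L *\<^sub>v v = (inv_mat Hplus * Bminus * inv_mat Bplus) *\<^sub>v (Hminus *\<^sub>v v)"
    unfolding L_eq by (rule assoc_mult_mat_vec) (use carriers v in auto)
  also have "\<dots> = (inv_mat Hplus * Bminus) *\<^sub>v (inv_mat Bplus *\<^sub>v (Hminus *\<^sub>v v))"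
    by (rule assoc_mult_mat_vec) (use carriers v in auto)
  also have "\<dots> = inv_mat Hplus *\<^sub>v (Bminus *\<^sub>v (inv_mat Bplus *\<^sub>v (Hminus *\<^sub>v v)))"
    by (rule assoc_mult_mat_vec) (use carriers v in auto)
  finally show ?thesis .
qed

lemma Hplus_L_mult_vec:
  "v \<in> carrier_vec (2*M) \<Longrightarrow> Hplus *\<^sub>v (L *\<^sub>v v) = Bminus *\<^sub>v (inv_mat Bplus *\<^sub>v (Hminus *\<^sub>v v))"
  unfolding L_mult_vec using Bplus_inv shifted_carrier by (intro Hplus_inv_mult_vec) simp

lemma Hplus_L_sqnorm_le:
  assumes x: "x \<in> carrier_vec (2*M)"
  shows "(Hplus *\<^sub>v (L *\<^sub>v x)) \<bullet> (Hplus *\<^sub>v (L *\<^sub>v x)) \<le> (sigma \<omega> T D)^2 * ((Hplus *\<^sub>v x) \<bullet> (Hplus *\<^sub>v x))"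
proof -
  define u where "u = inv_mat Bplus *\<^sub>v (Hminus *\<^sub>v x)"
  have Hminus_x: "Hminus *\<^sub>v x \<in> carrier_vec (2*M)" using shifted_carrier x by simp
  have u: "u \<in> carrier_vec (2*M)" unfolding u_def using Bplus_inv Hminus_x by simp
  have "(Hplus *\<^sub>v (L *\<^sub>v x)) \<bullet> (Hplus *\<^sub>v (L *\<^sub>v x)) = (Bminus *\<^sub>v u) \<bullet> (Bminus *\<^sub>v u)"
    unfolding Hplus_L_mult_vec[OF x] u_def ..
  also have "\<dots> \<le> contraction_B^2 * ((Bplus *\<^sub>v u) \<bullet> (Bplus *\<^sub>v u))" by (rule Bminus_sqnorm_le[OF u])
  also have "Bplus *\<^sub>v u = Hminus *\<^sub>v x" unfolding u_def by (rule Bplus_inv_mult_vec[OF Hminus_x])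
  also have "contraction_B^2 * ((Hminus *\<^sub>v x) \<bullet> (Hminus *\<^sub>v x))
      \<le> contraction_B^2 * (contraction_H^2 * ((Hplus *\<^sub>v x) \<bullet> (Hplus *\<^sub>v x)))"
    by (rule mult_left_mono[OF Hminus_sqnorm_le[OF x]]) simp
  finally show ?thesis unfolding sigma_eq by (simp add: power_mult_distrib)
qed

lemma eigenvalue_L_le:
  assumes "eigenvalue (map_mat complex_of_real L) l" shows "cmod l \<le> sigma \<omega> T D"
proof -
  let ?Lc = "map_mat complex_of_real L" and ?Hc = "map_mat complex_of_real Hplus"
  obtain v where v: "v \<in> carrier_vec (2*M)" "v \<noteq> 0\<^sub>v (2*M)" and Lv: "?Lc *\<^sub>v v = l \<cdot>\<^sub>v v"
    using assms L_carrier unfolding eigenvalue_def eigenvector_def by auto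
  note Re_Im = mult_mat_vec_of_real_Re_Im
  have Lv_carrier: "?Lc *\<^sub>v v \<in> carrier_vec (2*M)" using L_carrier v by simp
  have "sqnorm_cvec (?Hc *\<^sub>v (?Lc *\<^sub>v v)) \<le> (sigma \<omega> T D)^2 * sqnorm_cvec (?Hc *\<^sub>v v)"
    unfolding sqnorm_cvec_Re_Im Re_Im[OF shifted_carrier(3) Lv_carrier] Re_Im[OF L_carrier v(1)]
      Re_Im[OF shifted_carrier(3) v(1)] distrib_left
    by (intro add_mono Hplus_L_sqnorm_le) (use v in auto)
  moreover have "?Hc *\<^sub>v (?Lc *\<^sub>v v) = l \<cdot>\<^sub>v (?Hc *\<^sub>v v)"
    unfolding Lv using shifted_carrier(3) v by (simp add: mult_mat_vec)
  ultimately have le: "(cmod l)^2 * sqnorm_cvec (?Hc *\<^sub>v v) \<le> (sigma \<omega> T D)^2 * sqnorm_cvec (?Hc *\<^sub>v v)"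
    by (simp add: sqnorm_cvec_smult)
  have "?Hc *\<^sub>v v \<noteq> 0\<^sub>v (2*M)"
  proof
    assume "?Hc *\<^sub>v v = 0\<^sub>v (2*M)"
    then have "Hplus *\<^sub>v map_vec Re v = 0\<^sub>v (2*M)" "Hplus *\<^sub>v map_vec Im v = 0\<^sub>v (2*M)"
      using Re_Im[OF shifted_carrier(3) v(1)] by (auto simp: vec_eq_iff)
    then have "map_vec Re v = 0\<^sub>v (2*M)" "map_vec Im v = 0\<^sub>v (2*M)" using Hplus_kernel v by auto
    then show False using cvec_eq_0_iff_Re_Im[OF v(1)] v(2) by simp
  qed
  then have "sqnorm_cvec (?Hc *\<^sub>v v) > 0" using shifted_carrier(3) v by (intro sqnorm_cvec_pos) auto
  then have "(cmod l)^2 \<le> (sigma \<omega> T D)^2" using le by simp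
  then show ?thesis using sigma_nonneg by (simp add: power2_le_iff_abs_le)
qed

lemma spectral_radius_L_le: "spectral_radius (map_mat complex_of_real L) \<le> sigma \<omega> T D"
  using spectral_radius_of_real_le[OF L_carrier _ eigenvalue_L_le] M_pos by simp

lemma F_eq: "F = (1 / (2 * \<omega>)) \<cdot>\<^sub>m (Bplus * Hplus)"
  and G_eq: "G = (1 / (2 * \<omega>)) \<cdot>\<^sub>m (Bminus * Hminus)"
  unfolding Fmat_def Gmat_def Bplus_def Hplus_def Bminus_def Hminus_def Let_def by simp_all

lemma F_carrier: "F \<in> carrier_mat (2*M) (2*M)" and G_carrier: "G \<in> carrier_mat (2*M) (2*M)"
  unfolding F_eq G_eq using shifted_carrier by auto

lemma F_mult_vec: "v \<in> carrier_vec (2*M) \<Longrightarrow> F *\<^sub>v v = (1 / (2 * \<omega>)) \<cdot>\<^sub>v (Bplus *\<^sub>v (Hplus *\<^sub>v v))"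
  and G_mult_vec: "v \<in> carrier_vec (2*M) \<Longrightarrow> G *\<^sub>v v = (1 / (2 * \<omega>)) \<cdot>\<^sub>v (Bminus *\<^sub>v (Hminus *\<^sub>v v))"
  unfolding F_eq G_eq using shifted_carrier
  by (subst smult_mat_mult_vec[of _ "2*M" "2*M"]; auto simp: assoc_mult_mat_vec)+

lemma F_kernel:
  assumes v: "v \<in> carrier_vec (2*M)" and "F *\<^sub>v v = 0\<^sub>v (2*M)" shows "v = 0\<^sub>v (2*M)"
proof -
  have Hv: "Hplus *\<^sub>v v \<in> carrier_vec (2*M)" using shifted_carrier v by auto
  have "Bplus *\<^sub>v (Hplus *\<^sub>v v) = 2 * \<omega> \<cdot>\<^sub>v (F *\<^sub>v v)"
    unfolding F_mult_vec[OF v] using \<omega>_pos by (auto simp: smult_smult_assoc)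
  then have "Bplus *\<^sub>v (Hplus *\<^sub>v v) = 0\<^sub>v (2*M)" using assms(2) shifted_carrier by (auto simp: vec_eq_iff)
  then show ?thesis by (intro Hplus_kernel[OF v] Bplus_kernel[OF Hv])
qed

lemma F_inv: "inv_mat F \<in> carrier_mat (2*M) (2*M)" "inv_mat F * F = 1\<^sub>m (2*M)"
  using inv_mat_if_kernel_trivial[OF F_carrier F_kernel] by auto

lemma F_inv_mult_vec: "v \<in> carrier_vec (2*M) \<Longrightarrow> inv_mat F *\<^sub>v (F *\<^sub>v v) = v"
  using F_inv assoc_mult_mat_vec[OF F_inv(1) F_carrier, of v, symmetric] by simp

lemma R_eq: "R = Bblk D + Hblk T"
  by (rule eq_matI) (auto simp: Rblk_def Bblk_def Hblk_def)

lemma R_carrier: "R \<in> carrier_mat (2*M) (2*M)"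
  unfolding R_eq using Bblk_carrier Hblk_carrier by simp

lemma F_eq_G_plus_R:
  assumes v: "v \<in> carrier_vec (2*M)"
  shows "F *\<^sub>v v = G *\<^sub>v v + R *\<^sub>v v"
proof (rule eq_vecI)
  define h where "h = Hblk T *\<^sub>v v"
  have h: "h \<in> carrier_vec (2*M)" unfolding h_def using Hblk_carrier v by auto
  have Hplus_v: "Hplus *\<^sub>v v = \<omega> \<cdot>\<^sub>v v + h" and Hminus_v: "Hminus *\<^sub>v v = \<omega> \<cdot>\<^sub>v v - h"
    unfolding Hplus_def Hminus_def h_def by (rule shifted_mat_mult_vec[OF Hblk_carrier v])+
  have R_v: "R *\<^sub>v v = Bblk D *\<^sub>v v + h"
    unfolding R_eq h_def by (rule add_mult_distrib_mat_vec[OF Bblk_carrier Hblk_carrier v])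
  fix i assume "i < dim_vec (G *\<^sub>v v + R *\<^sub>v v)"
  then have i: "i < 2*M" using R_carrier by simp
  have "(F *\<^sub>v v) $ i = (1 / (2 * \<omega>)) * ((\<omega> - Ddiag2 i) * (\<omega> * v $ i + h $ i))"
    unfolding F_mult_vec[OF v] Hplus_v Bplus_mult_vec[OF add_carrier_vec[OF smult_carrier_vec[THEN iffD2, OF v] h]]
    using i v h by simp
  also have "\<dots> = (1 / (2 * \<omega>)) * ((\<omega> + Ddiag2 i) * (\<omega> * v $ i - h $ i)) + (- Ddiag2 i * v $ i + h $ i)"
    using \<omega>_pos by (simp add: field_simps)
  also have "\<dots> = (G *\<^sub>v v + R *\<^sub>v v) $ i"
    unfolding G_mult_vec[OF v] Hminus_v R_v Bblk_mult_vec[OF v]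
      Bminus_mult_vec[OF minus_carrier_vec[OF smult_carrier_vec[THEN iffD2, OF v] h]]
    using i v h shifted_carrier G_carrier Bblk_carrier by simp
  finally show "(F *\<^sub>v v) $ i = (G *\<^sub>v v + R *\<^sub>v v) $ i" .
qed (use F_carrier G_carrier R_carrier in simp)

lemma F_L_eq_G:
  assumes y: "y \<in> carrier_vec (2*M)" shows "F *\<^sub>v (L *\<^sub>v y) = G *\<^sub>v y"
proof -
  define w where "w = inv_mat Bplus *\<^sub>v (Hminus *\<^sub>v y)"
  have Hminus_y: "Hminus *\<^sub>v y \<in> carrier_vec (2*M)" using shifted_carrier y by simp
  have w: "w \<in> carrier_vec (2*M)" unfolding w_def using Bplus_inv(2) Hminus_y by simp
  have "Bplus *\<^sub>v (Bminus *\<^sub>v w) = Bminus *\<^sub>v (Bplus *\<^sub>v w)"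
    unfolding Bplus_mult_vec[OF mult_mat_vec_carrier[OF shifted_carrier(2) w]]
      Bminus_mult_vec[OF mult_mat_vec_carrier[OF shifted_carrier(1) w]]
    unfolding Bplus_mult_vec[OF w] Bminus_mult_vec[OF w]
    by (rule eq_vecI) (auto simp: algebra_simps)
  also have "Bplus *\<^sub>v w = Hminus *\<^sub>v y" unfolding w_def by (rule Bplus_inv_mult_vec[OF Hminus_y])
  finally show ?thesis
    unfolding F_mult_vec[OF mult_mat_vec_carrier[OF L_carrier y]] G_mult_vec[OF y]
      Hplus_L_mult_vec[OF y] w_def[symmetric] by simp
qed

lemma R_kernel:
  assumes v: "v \<in> carrier_vec (2*M)" and "R *\<^sub>v v = 0\<^sub>v (2*M)" shows "v = 0\<^sub>v (2*M)"
proof (rule ccontr)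
  assume "v \<noteq> 0\<^sub>v (2*M)"
  have "F *\<^sub>v (L *\<^sub>v v) = F *\<^sub>v v"
    unfolding F_L_eq_G[OF v] F_eq_G_plus_R[OF v] assms(2) using G_carrier v by simp
  then have "L *\<^sub>v v = v"
    using F_inv_mult_vec[OF v] F_inv_mult_vec[OF mult_mat_vec_carrier[OF L_carrier v]] by metis
  then have "eigenvector L v 1" unfolding eigenvector_def using v \<open>v \<noteq> 0\<^sub>v (2*M)\<close> L_carrier by auto
  then have "eigenvalue (map_mat complex_of_real L) 1"
    using of_real_hom.eigenvector_hom[OF L_carrier] unfolding eigenvalue_def by fastforce
  then show False using eigenvalue_L_le sigma_lt_1 by fastforce
qed

lemma solution_is_fixpoint:
  assumes x: "x \<in> carrier_vec (2*M)" and f: "R *\<^sub>v x = f"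
  shows "L *\<^sub>v x + inv_mat F *\<^sub>v f = x"
proof -
  have "f = F *\<^sub>v x - G *\<^sub>v x" unfolding f[symmetric] F_eq_G_plus_R[OF x]
    using R_carrier G_carrier x by (auto intro!: eq_vecI)
  also have "\<dots> = F *\<^sub>v x - F *\<^sub>v (L *\<^sub>v x)" unfolding F_L_eq_G[OF x] ..
  also have "\<dots> = F *\<^sub>v (x - L *\<^sub>v x)"
    using F_carrier L_carrier x by (simp add: mult_minus_distrib_mat_vec)
  finally have "inv_mat F *\<^sub>v f = x - L *\<^sub>v x"
    using F_inv_mult_vec L_carrier x by simp
  then show ?thesis using L_carrier x by (auto intro!: eq_vecI)
qed

lemma iteration_converges:
  assumes f: "f \<in> carrier_vec (2*M)" and x0: "x0 \<in> carrier_vec (2*M)"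
  shows "\<exists>x \<in> carrier_vec (2*M). R *\<^sub>v x = f \<and>
           vec_tendsto (\<lambda>k. ((\<lambda>v. L *\<^sub>v v + inv_mat F *\<^sub>v f) ^^ k) x0) x"
proof -
  note R_inv = inv_mat_if_kernel_trivial[OF R_carrier R_kernel]
  define x where "x = inv_mat R *\<^sub>v f"
  have x: "x \<in> carrier_vec (2*M)" unfolding x_def using R_inv f by simp
  have "R *\<^sub>v x = f" unfolding x_def
    using assoc_mult_mat_vec[OF R_carrier R_inv(2) f, symmetric] R_inv(3) f by simp
  moreover have "vec_tendsto (\<lambda>k. ((\<lambda>v. L *\<^sub>v v + inv_mat F *\<^sub>v f) ^^ k) x0) x"
    using F_inv f x x0 spectral_radius_L_le sigma_lt_1
    by (intro affine_iteration_tendsto[OF L_carrier] solution_is_fixpoint \<open>R *\<^sub>v x = f\<close>) auto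
  ultimately show ?thesis using x by blast
qed

end

theorem theorem1:
  fixes T D :: "real mat" and M :: nat and \<omega> :: real
  assumes "M > 0"
    and "spd_mat M T"
    and "D \<in> carrier_mat M M" and "diagonal_mat D" and "\<forall>i < M. D $$ (i, i) \<le> 0"
    and "\<omega> > 0"
  shows "invertible_mat (\<omega> \<cdot>\<^sub>m 1\<^sub>m (2 * M) + Bblk D)
       \<and> invertible_mat (\<omega> \<cdot>\<^sub>m 1\<^sub>m (2 * M) + Hblk T)
       \<and> spectral_radius (map_mat complex_of_real (Lmat \<omega> T D)) \<le> sigma \<omega> T D
       \<and> sigma \<omega> T D < 1
       \<and> (\<forall>f x0. f \<in> carrier_vec (2 * M) \<longrightarrow> x0 \<in> carrier_vec (2 * M) \<longrightarrow>
            (\<exists>x \<in> carrier_vec (2 * M). Rblk T D *\<^sub>v x = f \<and>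
               vec_tendsto (\<lambda>k. ((\<lambda>v. Lmat \<omega> T D *\<^sub>v v + inv_mat (Fmat \<omega> T D) *\<^sub>v f) ^^ k) x0) x))"
proof -
  interpret splitting_iteration T D M \<omega> using assms by unfold_locales
  show ?thesis
    using Bplus_inv(1) Hplus_inv(1) spectral_radius_L_le sigma_lt_1 iteration_converges
    unfolding Bplus_def Hplus_def by blast
qed

end
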